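(* Let $M,N$ be positive integers and $C_0,\dots,C_{N-1}\in\{0,1,\dots,M-1\}$ arbitrary. For $p\in\{0,\dots,M-1\}$, $q\in\{0,\dots,N-1\}$ let $\bm\psi_{p,q}\in\mathbb{C}^N$ have entries $[\bm\psi_{p,q}]_n=\frac{1}{\sqrt N}e^{j\frac{2\pi p}{M}C_n+j\frac{2\pi q}{N}n}$, $n=0,\dots,N-1$, let $\bm\Psi_q=[\bm\psi_{0,q},\dots,\bm\psi_{M-1,q}]$ and $\bm\Psi=[\bm\Psi_0,\dots,\bm\Psi_{N-1}]\in\mathbb{C}^{N\times MN}$. Then the spectral norm of $\bm\Psi$ equals $\|\bm\Psi\|_s=\sqrt M$.
   Context: $j$ denotes the imaginary unit; $\|\cdot\|_s$ is the spectral norm (largest singular value). *)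

theory Defs
  imports "Jordan_Normal_Form.Jordan_Normal_Form"
begin

definition herm_adj :: "complex mat \<Rightarrow> complex mat" where
  "herm_adj A = mat (dim_col A) (dim_row A) (\<lambda>(i,j). cnj (A $$ (j,i)))"

definition singular_values :: "complex mat \<Rightarrow> real set" where
  "singular_values A = {\<sigma>. \<sigma> \<ge> 0 \<and> eigenvalue (herm_adj A * A) (complex_of_real (\<sigma>^2))}"

definition spectral_norm :: "complex mat \<Rightarrow> real" where
  "spectral_norm A = Max (singular_values A)"

(* Psi in C^{N x MN}: column index k = q*M + p corresponds to psi_{p,q} *)
definition Psi_mat :: "nat \<Rightarrow> nat \<Rightarrow> (nat \<Rightarrow> nat) \<Rightarrow> complex mat" where
  "Psi_mat M N C = mat N (M * N) (\<lambda>(n,k).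
     let p = k mod M; q = k div M in
     (1 / complex_of_real (sqrt (real N))) *
     exp (\<i> * complex_of_real (2 * pi * real p / real M) * of_nat (C n)
        + \<i> * complex_of_real (2 * pi * real q / real N) * of_nat n))"

end

theory Submission
  imports Defs "HOL-Library.Real_Mod"
begin

(* The rows of Psi are orthogonal with squared norm M: the inner product of rows n and n'
   factors into a sum over p times a geometric sum over q of N-th roots of unity, which
   vanishes unless n = n'.  So Psi Psi^H = M I, hence P = Psi^H Psi satisfies P^2 = M P and
   its eigenvalues lie in {0, M}; M is attained on Psi^H e_0. *)

lemma sum_lessThan_mult_mod_div:
  fixes F G :: "nat \<Rightarrow> 'a::comm_semiring_0"
  shows "(\<Sum>k<N * M. F (k mod M) * G (k div M)) = (\<Sum>p<M. F p) * (\<Sum>q<N. G q)"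
proof -
  have "(\<Sum>k<N * M. F (k mod M) * G (k div M))
      = (\<Sum>q<N. \<Sum>k\<in>{q * M..<q * M + M}. F (k mod M) * G (k div M))"
    by (rule sum.nat_group[symmetric])
  also have "\<dots> = (\<Sum>q<N. \<Sum>p<M. F p * G q)"
  proof (rule sum.cong[OF refl])
    fix q
    show "(\<Sum>k\<in>{q * M..<q * M + M}. F (k mod M) * G (k div M)) = (\<Sum>p<M. F p * G q)"
      using sum.shift_bounds_nat_ivl[of "\<lambda>k. F (k mod M) * G (k div M)" 0 "q * M" M]
      by (simp add: atLeast0LessThan add.commute)
  qed
  also have "\<dots> = (\<Sum>p<M. F p) * (\<Sum>q<N. G q)"
    by (simp add: sum_product sum.swap[of _ "{..<N}"])
  finally show ?thesis .
qed

lemma sum_roots_of_unity_eq_0: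
  fixes d :: int
  assumes "\<not> int N dvd d"
  shows "(\<Sum>q<N. cis (2 * pi * real q * of_int d / real N)) = 0"
proof (cases "N = 0")
  case False
  then have "N > 0" by simp
  define \<omega> where "\<omega> = cis (2 * pi * of_int d / real N)"
  have "\<omega> \<noteq> 1"
  proof
    assume "\<omega> = 1"
    then obtain k :: int where "2 * pi * of_int d / real N = of_int k * (2 * pi)"
      by (auto simp: \<omega>_def cis_eq_1_iff)
    with \<open>N > 0\<close> have "of_int d = real N * of_int k" by (simp add: field_simps)
    then have "d = int N * k" by (metis of_int_eq_iff of_int_mult of_int_of_nat_eq)
    with assms show False by simp
  qed
  have "(\<Sum>q<N. cis (2 * pi * real q * of_int d / real N)) = (\<Sum>q<N. \<omega> ^ q)"
    by (simp add: \<omega>_def DeMoivre mult_ac)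
  also have "\<dots> = (\<omega> ^ N - 1) / (\<omega> - 1)"
    using \<open>\<omega> \<noteq> 1\<close> by (rule geometric_sum)
  also have "\<omega> ^ N = 1"
    using \<open>N > 0\<close> by (simp add: \<omega>_def DeMoivre)
  finally show ?thesis by simp
qed simp

lemma smult_mult_mat_vec:
  assumes "A \<in> carrier_mat nr nc" "v \<in> carrier_vec nc"
  shows "(k \<cdot>\<^sub>m A) *\<^sub>v v = (k :: 'a :: comm_ring_1) \<cdot>\<^sub>v (A *\<^sub>v v)"
  using assms by (intro eq_vecI) (auto simp: scalar_prod_def sum_distrib_left ac_simps)

lemma smult_vec_cancel_right:
  fixes a b :: "'a :: idom"
  assumes "v \<in> carrier_vec n" "v \<noteq> 0\<^sub>v n" "a \<cdot>\<^sub>v v = b \<cdot>\<^sub>v v"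
  shows "a = b"
proof -
  obtain i where "i < n" "v $ i \<noteq> 0"
    using assms(1,2) by (auto simp: vec_eq_iff)
  moreover have "(a \<cdot>\<^sub>v v) $ i = (b \<cdot>\<^sub>v v) $ i"
    using assms(3) by simp
  ultimately show ?thesis
    using assms(1) by simp
qed

lemma eigenvalue_of_square_eq_smult:
  fixes P :: "'a :: field mat"
  assumes P: "P \<in> carrier_mat n n" and PP: "P * P = c \<cdot>\<^sub>m P" and "eigenvalue P l"
  shows "l = 0 \<or> l = c"
proof -
  obtain v where v: "v \<in> carrier_vec n" "v \<noteq> 0\<^sub>v n" and Pv: "P *\<^sub>v v = l \<cdot>\<^sub>v v"
    using \<open>eigenvalue P l\<close> P unfolding eigenvalue_def eigenvector_def by auto
  have "(l * l) \<cdot>\<^sub>v v = (P * P) *\<^sub>v v"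
    using P v Pv by (simp add: mult_mat_vec smult_smult_assoc)
  also have "\<dots> = (c * l) \<cdot>\<^sub>v v"
    using P v Pv by (simp add: PP smult_mult_mat_vec smult_smult_assoc)
  finally have "l * l = c * l"
    by (rule smult_vec_cancel_right[OF v])
  then show ?thesis by auto
qed

lemma square_mult_swap:
  fixes A B :: "'a :: comm_ring_1 mat"
  assumes A: "A \<in> carrier_mat n m" and B: "B \<in> carrier_mat m n" and AB: "A * B = c \<cdot>\<^sub>m 1\<^sub>m n"
  shows "(B * A) * (B * A) = c \<cdot>\<^sub>m (B * A)"
proof -
  have "(B * A) * (B * A) = B * ((A * B) * A)"
    using A B by (simp add: assoc_mult_mat[of _ m n _ m _ m])
  also have "\<dots> = c \<cdot>\<^sub>m (B * A)"
    using A B by (simp add: AB mult_smult_assoc_mat[of _ n n _ m] mult_smult_distrib[of _ m n _ m])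
  finally show ?thesis .
qed

lemma eigenvalue_mult_swap:
  fixes A B :: "'a :: field mat"
  assumes A: "A \<in> carrier_mat n m" and B: "B \<in> carrier_mat m n" and AB: "A * B = c \<cdot>\<^sub>m 1\<^sub>m n"
    and "c \<noteq> 0" and "n > 0"
  shows "eigenvalue (B * A) c"
proof -
  define e where "e = (unit_vec n 0 :: 'a vec)"
  have e: "e \<in> carrier_vec n" "e \<noteq> 0\<^sub>v n"
    using \<open>n > 0\<close> by (auto simp: e_def vec_eq_iff)
  define v where "v = B *\<^sub>v e"
  have v: "v \<in> carrier_vec m"
    using B e by (simp add: v_def)
  have "A *\<^sub>v v = (A * B) *\<^sub>v e"
    using A B e by (simp add: v_def)
  also have "\<dots> = c \<cdot>\<^sub>v e"
    using e by (simp add: AB smult_mult_mat_vec[of _ n n])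
  finally have Av: "A *\<^sub>v v = c \<cdot>\<^sub>v e" .
  have "v \<noteq> 0\<^sub>v m"
  proof
    assume "v = 0\<^sub>v m"
    then have "c \<cdot>\<^sub>v e = 0 \<cdot>\<^sub>v e"
      using A e by (auto simp: Av[symmetric])
    with e \<open>c \<noteq> 0\<close> show False
      using smult_vec_cancel_right by blast
  qed
  have "(B * A) *\<^sub>v v = B *\<^sub>v (c \<cdot>\<^sub>v e)"
    using A B v by (simp add: Av)
  also have "\<dots> = c \<cdot>\<^sub>v v"
    using B e by (simp add: mult_mat_vec v_def)
  finally show ?thesis
    using \<open>v \<noteq> 0\<^sub>v m\<close> A B v unfolding eigenvalue_def eigenvector_def by auto
qed

lemma herm_adj_carrier: "A \<in> carrier_mat n m \<Longrightarrow> herm_adj A \<in> carrier_mat m n"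
  by (simp add: herm_adj_def)

lemma spectral_norm_eq_sqrt_if_mult_herm_adj:
  assumes A: "A \<in> carrier_mat n m" and "n > 0" and "r > 0"
    and AA: "A * herm_adj A = complex_of_real r \<cdot>\<^sub>m 1\<^sub>m n"
  shows "spectral_norm A = sqrt r"
proof -
  have A': "herm_adj A \<in> carrier_mat m n"
    using A by (rule herm_adj_carrier)
  have "singular_values A \<subseteq> {0, sqrt r}"
  proof
    fix \<sigma> assume "\<sigma> \<in> singular_values A"
    then have "\<sigma> \<ge> 0" and "eigenvalue (herm_adj A * A) (complex_of_real (\<sigma>\<^sup>2))"
      by (auto simp: singular_values_def)
    with eigenvalue_of_square_eq_smult[OF _ square_mult_swap[OF A A' AA]] A A'
    have "\<sigma>\<^sup>2 = 0 \<or> \<sigma>\<^sup>2 = r"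
      by (metis mult_carrier_mat of_real_0 of_real_eq_iff)
    with \<open>\<sigma> \<ge> 0\<close> show "\<sigma> \<in> {0, sqrt r}"
      by (auto simp: real_sqrt_unique)
  qed
  moreover have "sqrt r \<in> singular_values A"
    using eigenvalue_mult_swap[OF A A' AA] \<open>n > 0\<close> \<open>r > 0\<close>
    by (simp add: singular_values_def flip: of_real_power)
  ultimately show ?thesis
    unfolding spectral_norm_def using \<open>r > 0\<close> by (intro Max_eqI) (auto intro: finite_subset)
qed

lemma Psi_mat_carrier: "Psi_mat M N C \<in> carrier_mat N (M * N)"
  by (simp add: Psi_mat_def)

lemma Psi_mat_entry:
  assumes "n < N" and "k < M * N"
  shows "Psi_mat M N C $$ (n, k) = complex_of_real (1 / sqrt (real N))
    * cis (2 * pi * real (k mod M) * real (C n) / real M)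
    * cis (2 * pi * real (k div M) * real n / real N)"
  using assms by (simp add: Psi_mat_def Let_def cis_conv_exp exp_add mult_ac)

lemma Psi_mat_mult_herm_adj:
  "Psi_mat M N C * herm_adj (Psi_mat M N C) = of_nat M \<cdot>\<^sub>m 1\<^sub>m N"
proof (rule eq_matI)
  let ?\<Psi> = "Psi_mat M N C"
  fix n n' assume "n < dim_row (of_nat M \<cdot>\<^sub>m 1\<^sub>m N :: complex mat)"
    and "n' < dim_col (of_nat M \<cdot>\<^sub>m 1\<^sub>m N :: complex mat)"
  then have n: "n < N" and n': "n' < N" by auto
  define F where "F p = cis (2 * pi * real p * (real (C n) - real (C n')) / real M)" for p
  define G where "G q = cis (2 * pi * real q * of_int (int n - int n') / real N)" for q
  have "(?\<Psi> * herm_adj ?\<Psi>) $$ (n, n') = (\<Sum>k<N * M. ?\<Psi> $$ (n, k) * cnj (?\<Psi> $$ (n', k)))"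
    using n n' by (simp add: Psi_mat_def herm_adj_def scalar_prod_def lessThan_atLeast0 mult.commute)
  also have "\<dots> = (\<Sum>k<N * M. complex_of_real (1 / real N) * (F (k mod M) * G (k div M)))"
  proof (rule sum.cong[OF refl])
    fix k assume "k \<in> {..<N * M}"
    then have k: "k < M * N" by (simp add: mult.commute)
    show "?\<Psi> $$ (n, k) * cnj (?\<Psi> $$ (n', k)) = complex_of_real (1 / real N) * (F (k mod M) * G (k div M))"
      by (simp add: Psi_mat_entry[OF n k] Psi_mat_entry[OF n' k] F_def G_def cis_cnj
          cis_mult mult_ac flip: of_real_mult) (simp add: algebra_simps diff_divide_distrib)
  qed
  also have "\<dots> = complex_of_real (1 / real N) * ((\<Sum>p<M. F p) * (\<Sum>q<N. G q))"
    by (simp only: sum_distrib_left[symmetric] sum_lessThan_mult_mod_div)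
  also have "\<dots> = (of_nat M \<cdot>\<^sub>m 1\<^sub>m N :: complex mat) $$ (n, n')"
  proof (cases "n = n'")
    case True
    then show ?thesis using n by (simp add: F_def G_def)
  next
    case False
    then have "\<not> int N dvd (int n - int n')"
      using n n' dvd_imp_le_int[of "int n - int n'" "int N"] by auto
    then have "(\<Sum>q<N. G q) = 0"
      unfolding G_def by (rule sum_roots_of_unity_eq_0)
    then show ?thesis using False n n' by simp
  qed
  finally show "(?\<Psi> * herm_adj ?\<Psi>) $$ (n, n') = (of_nat M \<cdot>\<^sub>m 1\<^sub>m N :: complex mat) $$ (n, n')" .
qed (simp_all add: Psi_mat_def herm_adj_def)

theorem corollary1:
  fixes M N :: nat and C :: "nat \<Rightarrow> nat"
  assumes "M > 0" and "N > 0"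
    and "\<And>n. n < N \<Longrightarrow> C n < M"
  shows "spectral_norm (Psi_mat M N C) = sqrt (real M)"
proof -
  have "Psi_mat M N C * herm_adj (Psi_mat M N C) = complex_of_real (real M) \<cdot>\<^sub>m 1\<^sub>m N"
    by (simp add: Psi_mat_mult_herm_adj)
  then show ?thesis
    using spectral_norm_eq_sqrt_if_mult_herm_adj[OF Psi_mat_carrier] assms(1,2) by simp
qed

end
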